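(* Let $N\ge1$, $\Psi_N$ the $N\times N$ matrix $(\Psi_N)_{jk}=\binom{j}{k}$, $\Lambda_N=\mathrm{diag}(1,-1,\dots,(-1)^{N-1})$, and $J_N$ the $N\times N$ symmetric tridiagonal matrix with $(J_N)_{kk}=k(2k^2+3k+2-N^2)$ and $(J_N)_{k,k+1}=(J_N)_{k+1,k}=(k+1)(N^2-(k+1)^2)$. Then $$\Psi_N^{-1}J_N\Psi_N=-\Lambda_NJ_N\Lambda_N+(N^2-1)I_N,$$ and moreover $(\Psi_N\Lambda_N)^2=I_N$ and $\Psi_N^\intercal\Psi_N=\Lambda_NT_N^{-1}\Lambda_N$, where $(T_N)_{jk}=\binom{j+k}{j}$.
   Context: Matrix indices start at $0$; $I_N$ is the $N\times N$ identity matrix. *)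

theory Defs
  imports "Jordan_Normal_Form.Gauss_Jordan_Elimination"
begin

definition inv_mat :: "'a :: field mat \<Rightarrow> 'a mat" where
  "inv_mat A = the (mat_inverse A)"

(* Psi_N: (j,k) entry = binomial(j,k), indices from 0 *)
definition Psi :: "nat \<Rightarrow> real mat" where
  "Psi N = mat N N (\<lambda>(j,k). real (j choose k))"

definition Lam :: "nat \<Rightarrow> real mat" where
  "Lam N = mat N N (\<lambda>(j,k). if j = k then (-1) ^ j else 0)"

definition Jm :: "nat \<Rightarrow> real mat" where
  "Jm N = mat N N (\<lambda>(j,k).
     let n = real N; a = real j; b = real k in
     if j = k then a * (2 * a^2 + 3 * a + 2 - n^2)
     else if k = j + 1 then (a + 1) * (n^2 - (a + 1)^2)
     else if j = k + 1 then (b + 1) * (n^2 - (b + 1)^2)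
     else 0)"

definition Tm :: "nat \<Rightarrow> real mat" where
  "Tm N = mat N N (\<lambda>(j,k). real ((j + k) choose j))"

end

theory Submission
  imports Defs
begin

(* Binomial inversion, sum_l (-1)^l C(j,l) C(l,k) = (-1)^k [j = k], says Psi Lam Psi = Lam. Hence
   Lam Psi Lam is the inverse of Psi, (Psi Lam)^2 = I, and transposing gives Psi^T Lam Psi^T = Lam;
   with Vandermonde's T = Psi Psi^T this yields T^-1 = Lam Psi^T Psi Lam.
   For the conjugation it suffices to show J Psi = Psi M with M = -Lam J Lam + (N^2 - 1) I. Both J and
   M are symmetric tridiagonal, so the (j,k) entries of both sides are three-term combinations of
   binomial coefficients next to C(j,k); expressing these through their ratios to C(j,k) reduces the
   claim to a polynomial identity. No boundary terms appear because the off-diagonal entry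
   (a + 1)(N^2 - (a + 1)^2) vanishes at a = -1 and at a = N - 1. *)

lemma mult_mat_mat:
  "mat n m f * mat m p g = mat n p (\<lambda>(i, k). \<Sum>l<m. f (i, l) * g (l, k))"
  by (rule eq_matI) (auto simp: scalar_prod_def lessThan_atLeast0)

lemma inv_mat_eqI:
  fixes A B :: "'a :: field mat"
  assumes A: "A \<in> carrier_mat n n" and B: "B \<in> carrier_mat n n"
    and AB: "A * B = 1\<^sub>m n" and BA: "B * A = 1\<^sub>m n"
  shows "inv_mat A = B"
proof (cases "mat_inverse A")
  case None
  from mat_inverse(1)[OF A None, of undefined] A B AB BA show ?thesis
    by (auto simp: Units_def ring_mat_def)
next
  case (Some C)
  from mat_inverse(2)[OF A Some] have C: "A * C = 1\<^sub>m n" "C * A = 1\<^sub>m n" "C \<in> carrier_mat n n"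
    by auto
  have "C = C * (A * B)" using AB C by simp
  also have "\<dots> = (C * A) * B" using A B C(3) by (simp add: assoc_mult_mat)
  also have "\<dots> = B" using B C(2) by simp
  finally show ?thesis using Some by (simp add: inv_mat_def)
qed

lemma invertible_matI:
  assumes "A \<in> carrier_mat n n" "B \<in> carrier_mat n n" "A * B = 1\<^sub>m n" "B * A = 1\<^sub>m n"
  shows "invertible_mat A"
  using assms unfolding invertible_mat_def inverts_mat_def by auto

lemma Lam_mult_mat: "Lam N * mat N N f = mat N N (\<lambda>(j, k). (-1) ^ j * f (j, k))"
  unfolding Lam_def mult_mat_mat
  by (rule eq_matI)
    (auto simp: if_distrib[of "\<lambda>x. x * _"] if_distrib[of "\<lambda>x. _ * x"] sum.delta sum.delta'
      cong: if_cong)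

lemma mat_mult_Lam: "mat N N f * Lam N = mat N N (\<lambda>(j, k). f (j, k) * (-1) ^ k)"
  unfolding Lam_def mult_mat_mat
  by (rule eq_matI)
    (auto simp: if_distrib[of "\<lambda>x. x * _"] if_distrib[of "\<lambda>x. _ * x"] sum.delta sum.delta'
      cong: if_cong)

lemma sum_alternating_choose_mult_choose:
  "(\<Sum>l\<le>j. (-1) ^ l * of_nat (j choose l) * of_nat (l choose k) :: 'a :: comm_ring_1)
     = (if j = k then (-1) ^ k else 0)"
proof (cases "k \<le> j")
  case False
  then show ?thesis by (auto intro!: sum.neutral simp: binomial_eq_0)
next
  case True
  have "(\<Sum>l\<le>j. (-1) ^ l * of_nat (j choose l) * of_nat (l choose k) :: 'a)
      = (\<Sum>i\<le>j - k. (-1) ^ (k + i) * of_nat (j choose (k + i)) * of_nat ((k + i) choose k))"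
  proof -
    have "(\<Sum>l\<le>j. (-1) ^ l * of_nat (j choose l) * of_nat (l choose k) :: 'a)
        = (\<Sum>l\<in>{k..j}. (-1) ^ l * of_nat (j choose l) * of_nat (l choose k))"
      by (rule sum.mono_neutral_right) (auto simp: binomial_eq_0)
    then show ?thesis
      using sum.atLeastAtMost_shift_0[OF True] by (simp add: atLeast0AtMost)
  qed
  also have "\<dots> = (-1) ^ k * of_nat (j choose k) * (\<Sum>i\<le>j - k. (-1) ^ i * of_nat ((j - k) choose i))"
    unfolding sum_distrib_left
  proof (rule sum.cong)
    fix i assume "i \<in> {..j - k}"
    then have "k + i \<le> j" using True by simp
    then have "(j choose (k + i)) * ((k + i) choose k) = (j choose k) * ((j - k) choose i)"
      using choose_mult[of k "k + i" j] by simp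
    then have "of_nat (j choose (k + i)) * of_nat ((k + i) choose k)
        = (of_nat (j choose k) * of_nat ((j - k) choose i) :: 'a)"
      by (metis of_nat_mult)
    then show "(-1) ^ (k + i) * of_nat (j choose (k + i)) * of_nat ((k + i) choose k)
        = (-1) ^ k * of_nat (j choose k) * ((-1) ^ i * of_nat ((j - k) choose i) :: 'a)"
      by (simp add: power_add mult_ac)
  qed simp
  also have "\<dots> = (if j = k then (-1) ^ k else 0)"
    using choose_alternating_sum[of "j - k", where 'a='a] True by auto
  finally show ?thesis .
qed

lemma sum_choose_mult_choose: "(\<Sum>l\<le>k. (j choose l) * (k choose l)) = (j + k) choose j"
proof -
  have "(\<Sum>l\<le>k. (j choose l) * (k choose l)) = (\<Sum>l\<le>k. (j choose l) * (k choose (k - l)))"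
    by (rule sum.cong) (auto simp flip: binomial_symmetric)
  also have "\<dots> = (j + k) choose k" by (rule vandermonde)
  finally show ?thesis using binomial_symmetric[of j "j + k"] by simp
qed

lemma binomial_neighbour_ratios:
  fixes j k :: nat
  assumes "k \<le> j"
  shows "(real j - real k + 1) * real (Suc j choose k) = (real j + 1) * real (j choose k)"
    and "real j * real ((j - 1) choose k) = (real j - real k) * real (j choose k)"
    and "(real k + 1) * real (j choose Suc k) = (real j - real k) * real (j choose k)"
    and "(real j - real k + 1) * (real k * real (j choose (k - 1))) = real k * (real k * real (j choose k))"
proof -
  have "real (Suc j - k) * real (Suc j choose k) = real (Suc j) * real (j choose k)"
    using binomial_absorb_comp[of "Suc j" k] by (metis diff_Suc_1 of_nat_mult)
  then show "(real j - real k + 1) * real (Suc j choose k) = (real j + 1) * real (j choose k)"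
    using assms by (simp add: of_nat_diff algebra_simps)
  have "real j * real ((j - 1) choose k) = real (j - k) * real (j choose k)"
    using binomial_absorb_comp[of j k] by (metis of_nat_mult)
  then show "real j * real ((j - 1) choose k) = (real j - real k) * real (j choose k)"
    using assms by (simp add: of_nat_diff)
  have lower: "(real i + 1) * real (j choose Suc i) = (real j - real i) * real (j choose i)"
    if "i \<le> j" for i
  proof -
    have "real (Suc i) * real (j choose Suc i) = real (j - i) * real (j choose i)"
      using binomial_absorption[of i j] binomial_absorb_comp[of j i] by (metis of_nat_mult)
    then show ?thesis using that by (simp add: of_nat_diff algebra_simps)
  qed
  then show "(real k + 1) * real (j choose Suc k) = (real j - real k) * real (j choose k)"
    using assms .
  show "(real j - real k + 1) * (real k * real (j choose (k - 1))) = real k * (real k * real (j choose k))"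
  proof (cases k)
    case (Suc i)
    then have "(real j - real k + 1) * real (j choose (k - 1)) = real k * real (j choose k)"
      using lower[of i] assms by (simp add: algebra_simps)
    then show ?thesis by (metis mult.left_commute)
  qed simp
qed

lemma carrier_Psi_Lam_Jm_Tm [simp]:
  "Psi N \<in> carrier_mat N N" "Lam N \<in> carrier_mat N N"
  "Jm N \<in> carrier_mat N N" "Tm N \<in> carrier_mat N N"
  by (simp_all add: Psi_def Lam_def Jm_def Tm_def)

lemma square_mult_carrier_mat [simp]:
  "A \<in> carrier_mat n n \<Longrightarrow> B \<in> carrier_mat n n \<Longrightarrow> A * B \<in> carrier_mat n n"
  by (rule mult_carrier_mat)

lemma transpose_Lam: "transpose_mat (Lam N) = Lam N"
  by (rule eq_matI) (auto simp: Lam_def)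

lemma Lam_mult_Lam: "Lam N * Lam N = 1\<^sub>m N"
  unfolding Lam_mult_mat[of N "\<lambda>(j, k). if j = k then (-1) ^ j else 0", folded Lam_def]
  by (rule eq_matI) (auto simp flip: power_add)

lemma Psi_Lam_Psi: "Psi N * Lam N * Psi N = Lam N"
proof (rule eq_matI)
  fix j k assume jk: "j < dim_row (Lam N)" "k < dim_col (Lam N)"
  have "(\<Sum>l<N. real (j choose l) * (-1) ^ l * real (l choose k))
      = (\<Sum>l\<le>j. (-1) ^ l * real (j choose l) * real (l choose k))"
    by (rule sum.mono_neutral_cong_right) (use jk in \<open>auto simp: Lam_def binomial_eq_0\<close>)
  then show "(Psi N * Lam N * Psi N) $$ (j, k) = Lam N $$ (j, k)"
    using jk unfolding Psi_def mat_mult_Lam mult_mat_mat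
    by (simp add: sum_alternating_choose_mult_choose Lam_def)
qed (simp_all add: Psi_def Lam_def)

lemma Psi_Lam_involution: "(Psi N * Lam N) * (Psi N * Lam N) = 1\<^sub>m N"
proof -
  have "(Psi N * Lam N) * (Psi N * Lam N) = (Psi N * Lam N * Psi N) * Lam N"
    by (simp add: assoc_mult_mat[of _ N N _ N _ N])
  then show ?thesis by (simp add: Psi_Lam_Psi Lam_mult_Lam)
qed

lemma Psi_inverse:
  "Psi N * (Lam N * Psi N * Lam N) = 1\<^sub>m N"
  "(Lam N * Psi N * Lam N) * Psi N = 1\<^sub>m N"
proof -
  have "Psi N * (Lam N * Psi N * Lam N) = (Psi N * Lam N) * (Psi N * Lam N)"
    by (simp add: assoc_mult_mat[of _ N N _ N _ N])
  then show "Psi N * (Lam N * Psi N * Lam N) = 1\<^sub>m N"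
    by (simp add: Psi_Lam_involution)
  have "(Lam N * Psi N * Lam N) * Psi N = Lam N * (Psi N * Lam N * Psi N)"
    by (simp add: assoc_mult_mat[of _ N N _ N _ N])
  then show "(Lam N * Psi N * Lam N) * Psi N = 1\<^sub>m N"
    by (simp add: Psi_Lam_Psi Lam_mult_Lam)
qed

lemma inv_mat_Psi: "inv_mat (Psi N) = Lam N * Psi N * Lam N"
  using Psi_inverse by (intro inv_mat_eqI) simp_all

lemma transpose_Psi: "transpose_mat (Psi N) = mat N N (\<lambda>(j, k). real (k choose j))"
  by (rule eq_matI) (auto simp: Psi_def)

lemma transpose_Psi_Lam_transpose_Psi:
  "transpose_mat (Psi N) * Lam N * transpose_mat (Psi N) = Lam N"
proof -
  have "transpose_mat (Psi N * Lam N * Psi N)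
      = transpose_mat (Psi N) * transpose_mat (Lam N) * transpose_mat (Psi N)"
    by (simp add: transpose_mult[of _ N N _ N] assoc_mult_mat[of _ N N _ N _ N])
  then show ?thesis by (simp add: Psi_Lam_Psi transpose_Lam)
qed

lemma Tm_eq_Psi_transpose_Psi: "Tm N = Psi N * transpose_mat (Psi N)"
proof (rule eq_matI)
  fix j k assume "j < dim_row (Psi N * transpose_mat (Psi N))"
    "k < dim_col (Psi N * transpose_mat (Psi N))"
  then have jk: "j < N" "k < N" by (simp_all add: Psi_def)
  have "(\<Sum>l<N. real (j choose l) * real (k choose l)) = real (\<Sum>l\<le>k. (j choose l) * (k choose l))"
    by (subst of_nat_sum, rule sum.mono_neutral_cong_right) (use jk in \<open>auto simp: binomial_eq_0\<close>)
  then show "Tm N $$ (j, k) = (Psi N * transpose_mat (Psi N)) $$ (j, k)"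
    using jk by (simp add: Tm_def Psi_def sum_choose_mult_choose scalar_prod_def lessThan_atLeast0)
qed (simp_all add: Tm_def Psi_def)

lemma Tm_inverse:
  "Tm N * (Lam N * transpose_mat (Psi N) * Psi N * Lam N) = 1\<^sub>m N"
  "(Lam N * transpose_mat (Psi N) * Psi N * Lam N) * Tm N = 1\<^sub>m N"
proof -
  have "Tm N * (Lam N * transpose_mat (Psi N) * Psi N * Lam N)
      = Psi N * (transpose_mat (Psi N) * Lam N * transpose_mat (Psi N)) * (Psi N * Lam N)"
    by (simp add: Tm_eq_Psi_transpose_Psi assoc_mult_mat[of _ N N _ N _ N])
  then show "Tm N * (Lam N * transpose_mat (Psi N) * Psi N * Lam N) = 1\<^sub>m N"
    by (simp add: transpose_Psi_Lam_transpose_Psi Psi_Lam_involution)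
  have "(Lam N * transpose_mat (Psi N) * Psi N * Lam N) * Tm N
      = Lam N * (transpose_mat (Psi N) * (Psi N * Lam N * Psi N) * transpose_mat (Psi N))"
    by (simp add: Tm_eq_Psi_transpose_Psi assoc_mult_mat[of _ N N _ N _ N])
  then show "(Lam N * transpose_mat (Psi N) * Psi N * Lam N) * Tm N = 1\<^sub>m N"
    by (simp add: Psi_Lam_Psi transpose_Psi_Lam_transpose_Psi Lam_mult_Lam)
qed

lemma inv_mat_Tm: "inv_mat (Tm N) = Lam N * transpose_mat (Psi N) * Psi N * Lam N"
  using Tm_inverse by (intro inv_mat_eqI) simp_all

definition jacobi_diag :: "real \<Rightarrow> real \<Rightarrow> real" where
  "jacobi_diag n a = a * (2 * a\<^sup>2 + 3 * a + 2 - n\<^sup>2)"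

definition jacobi_off :: "real \<Rightarrow> real \<Rightarrow> real" where
  "jacobi_off n a = (a + 1) * (n\<^sup>2 - (a + 1)\<^sup>2)"

lemma jacobi_neighbour_identity:
  fixes n j k x a b c d :: real
  assumes "(j - k + 1) * a = (j + 1) * x" "j * b = (j - k) * x" "(k + 1) * c = (j - k) * x"
    and "(j - k + 1) * (k * d) = k * (k * x)" "j \<noteq> 0" "j - k + 1 \<noteq> 0"
  shows "jacobi_diag n j * x + jacobi_off n j * a + jacobi_off n (j - 1) * b
    = (n\<^sup>2 - 1 - jacobi_diag n k) * x + jacobi_off n k * c + jacobi_off n (k - 1) * d"
  \<comment> \<open>HOL-Algebra, loaded with Jordan_Normal_Form, shadows the Groebner basis method \<open>algebra\<close>.\<close>
  using assms unfolding jacobi_diag_def jacobi_off_def by Groebner_Basis.algebra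

text \<open>For \<open>j = 0\<close> or \<open>k = 0\<close> the truncated \<open>j - 1\<close>, \<open>k - 1\<close> are harmless: their coefficient
  \<open>jacobi_off n (-1)\<close> is zero.\<close>

lemma jacobi_binomial_identity:
  fixes n :: real and j k :: nat
  shows "jacobi_diag n j * real (j choose k) + jacobi_off n j * real (Suc j choose k)
      + jacobi_off n (real j - 1) * real ((j - 1) choose k)
    = (n\<^sup>2 - 1 - jacobi_diag n k) * real (j choose k) + jacobi_off n k * real (j choose Suc k)
      + jacobi_off n (real k - 1) * real (j choose (k - 1))"
proof (cases "k \<le> j")
  case False
  then show ?thesis
    by (cases "k = Suc j") (simp_all add: binomial_eq_0 jacobi_off_def)
next
  case True
  show ?thesis
  proof (cases "j = 0")
    case True
    with \<open>k \<le> j\<close> show ?thesis by (simp add: jacobi_diag_def jacobi_off_def)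
  next
    case False
    then have "real j \<noteq> 0" "real j - real k + 1 \<noteq> 0"
      using \<open>k \<le> j\<close> by simp_all
    then show ?thesis
      using jacobi_neighbour_identity binomial_neighbour_ratios[OF \<open>k \<le> j\<close>] by blast
  qed
qed

definition sym_tridiag_mat :: "nat \<Rightarrow> (real \<Rightarrow> real) \<Rightarrow> (real \<Rightarrow> real) \<Rightarrow> real mat" where
  "sym_tridiag_mat N d e = mat N N (\<lambda>(j, l).
     if l = j then d (real j) else if l = j + 1 then e (real j) else if j = l + 1 then e (real l) else 0)"

lemma dim_sym_tridiag_mat [simp]:
  "dim_row (sym_tridiag_mat N d e) = N" "dim_col (sym_tridiag_mat N d e) = N"
  by (simp_all add: sym_tridiag_mat_def)

lemma Jm_eq_sym_tridiag_mat: "Jm N = sym_tridiag_mat N (jacobi_diag (real N)) (jacobi_off (real N))"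
  by (rule eq_matI) (auto simp: Jm_def sym_tridiag_mat_def jacobi_diag_def jacobi_off_def Let_def)

lemma shifted_Lam_Jm_Lam_eq_sym_tridiag_mat:
  "- (Lam N * Jm N * Lam N) + c \<cdot>\<^sub>m 1\<^sub>m N
     = sym_tridiag_mat N (\<lambda>a. c - jacobi_diag (real N) a) (jacobi_off (real N))"
  unfolding Jm_eq_sym_tridiag_mat sym_tridiag_mat_def Lam_mult_mat mat_mult_Lam
  by (rule eq_matI) (auto simp flip: power_add)

lemma sym_tridiag_mat_symmetric:
  "i < N \<Longrightarrow> k < N \<Longrightarrow> sym_tridiag_mat N d e $$ (i, k) = sym_tridiag_mat N d e $$ (k, i)"
  by (auto simp: sym_tridiag_mat_def)

lemma sym_tridiag_mat_row_sum:
  assumes "j < N" "e (-1) = 0" "e (real N - 1) = 0"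
  shows "(\<Sum>l<N. sym_tridiag_mat N d e $$ (j, l) * f l)
    = d (real j) * f j + e (real j) * f (j + 1) + e (real j - 1) * f (j - 1)"
proof -
  have "(\<Sum>l<N. sym_tridiag_mat N d e $$ (j, l) * f l)
      = (\<Sum>l<N. if l = j then d (real j) * f l else 0)
      + (\<Sum>l<N. if l = j + 1 then e (real j) * f l else 0)
      + (\<Sum>l<N. if l + 1 = j then e (real l) * f l else 0)"
    unfolding sum.distrib[symmetric] using \<open>j < N\<close>
    by (intro sum.cong) (auto simp: sym_tridiag_mat_def)
  also have "(\<Sum>l<N. if l = j then d (real j) * f l else 0) = d (real j) * f j"
    using \<open>j < N\<close> by simp
  also have "(\<Sum>l<N. if l = j + 1 then e (real j) * f l else 0) = e (real j) * f (j + 1)"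
  proof (cases "j + 1 < N")
    case False
    then have "real j = real N - 1" using \<open>j < N\<close> by simp
    with assms(3) show ?thesis by simp
  qed simp
  also have "(\<Sum>l<N. if l + 1 = j then e (real l) * f l else 0) = e (real j - 1) * f (j - 1)"
  proof (cases j)
    case (Suc i)
    then have "(\<Sum>l<N. if l + 1 = j then e (real l) * f l else 0)
        = (\<Sum>l<N. if l = i then e (real l) * f l else 0)"
      by (intro sum.cong) auto
    with Suc \<open>j < N\<close> show ?thesis by simp
  qed (simp add: assms(2))
  finally show ?thesis .
qed

lemma Jm_Psi_intertwining:
  fixes N :: nat
  defines "M \<equiv> - (Lam N * Jm N * Lam N) + (real N ^ 2 - 1) \<cdot>\<^sub>m 1\<^sub>m N"
  shows "Jm N * Psi N = Psi N * M"
proof (rule eq_matI)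
  let ?J = "sym_tridiag_mat N (jacobi_diag (real N)) (jacobi_off (real N))"
  have M: "M = sym_tridiag_mat N (\<lambda>a. real N ^ 2 - 1 - jacobi_diag (real N) a) (jacobi_off (real N))"
    unfolding M_def by (rule shifted_Lam_Jm_Lam_eq_sym_tridiag_mat)
  have off: "jacobi_off (real N) (-1) = 0" "jacobi_off (real N) (real N - 1) = 0"
    by (simp_all add: jacobi_off_def)
  fix j k assume "j < dim_row (Psi N * M)" "k < dim_col (Psi N * M)"
  then have jk: "j < N" "k < N" by (simp_all add: M Psi_def)
  have "(Jm N * Psi N) $$ (j, k) = (\<Sum>l<N. ?J $$ (j, l) * real (l choose k))"
    using jk by (simp add: Jm_eq_sym_tridiag_mat Psi_def scalar_prod_def lessThan_atLeast0)
  also have "\<dots> = (\<Sum>i<N. M $$ (k, i) * real (j choose i))"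
    unfolding M sym_tridiag_mat_row_sum[OF jk(1) off] sym_tridiag_mat_row_sum[OF jk(2) off]
    using jacobi_binomial_identity by simp
  also have "\<dots> = (Psi N * M) $$ (j, k)"
    using jk sym_tridiag_mat_symmetric[of _ N]
    by (simp add: M Psi_def scalar_prod_def lessThan_atLeast0 mult.commute)
  finally show "(Jm N * Psi N) $$ (j, k) = (Psi N * M) $$ (j, k)" .
qed (simp_all add: M_def Jm_def Psi_def)

lemma inv_Psi_Jm_Psi:
  fixes N :: nat
  defines "M \<equiv> - (Lam N * Jm N * Lam N) + (real N ^ 2 - 1) \<cdot>\<^sub>m 1\<^sub>m N"
  shows "inv_mat (Psi N) * Jm N * Psi N = M"
proof -
  have "inv_mat (Psi N) * Jm N * Psi N = (Lam N * Psi N * Lam N) * (Psi N * M)"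
    unfolding inv_mat_Psi M_def Jm_Psi_intertwining[symmetric]
    by (simp add: assoc_mult_mat[of _ N N _ N _ N])
  also have "\<dots> = M"
    using Psi_inverse(2) unfolding M_def by (simp flip: assoc_mult_mat[of _ N N _ N _ N])
  finally show ?thesis .
qed

lemma transpose_Psi_mult_Psi: "transpose_mat (Psi N) * Psi N = Lam N * inv_mat (Tm N) * Lam N"
proof -
  have "Lam N * inv_mat (Tm N) * Lam N
      = (Lam N * Lam N) * (transpose_mat (Psi N) * Psi N) * (Lam N * Lam N)"
    unfolding inv_mat_Tm by (simp add: assoc_mult_mat[of _ N N _ N _ N])
  then show ?thesis
    by (simp add: Lam_mult_Lam left_mult_one_mat[of _ N N] right_mult_one_mat[of _ N N])
qed

theorem mainTheorem8:
  fixes N :: nat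
  assumes "N \<ge> 1"
  shows "invertible_mat (Psi N)
    \<and> inv_mat (Psi N) * Jm N * Psi N
           = - (Lam N * Jm N * Lam N) + (real N ^ 2 - 1) \<cdot>\<^sub>m 1\<^sub>m N
    \<and> (Psi N * Lam N) * (Psi N * Lam N) = 1\<^sub>m N
    \<and> invertible_mat (Tm N)
    \<and> transpose_mat (Psi N) * Psi N = Lam N * inv_mat (Tm N) * Lam N"
  using invertible_matI[OF _ _ Psi_inverse] invertible_matI[OF _ _ Tm_inverse]
    inv_Psi_Jm_Psi Psi_Lam_involution transpose_Psi_mult_Psi
  by simp

end
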